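(* Let the spot price $\pi$ have CDF $F_{\pi}$ and monotonically decreasing density $f_{\pi}$ on $[\underline{\pi},\bar{\pi}]$ with $0\le\underline{\pi}<\bar{\pi}$, and let $t_k,t_e,t_s,t_r>0$ with $t_s<t_e\le 2t_s$. Let $q_1^*$ be the optimal value of $q$ in problem (P1): minimize $\Phi_1(p,q)=q\,t_e\bar{\pi}+\frac{(1-q)t_e\int_{\underline{\pi}}^{p}x f_{\pi}(x)\,dx}{F_{\pi}(p)}$ subject to $(1-q)t_e\le \frac{t_k}{1-F_{\pi}(p)}$, $t_k\left(\frac{1}{F_{\pi}(p)}-1\right)+(1-q)t_e\le t_s$, $q t_e\le t_s$, $\underline{\pi}\le p\le\bar{\pi}$, $0\le q\le 1$. Let $q_3^*$ be the optimal value of $q$ in problem (P3): minimize $\Phi_3(p,q)=q\,t_e\bar{\pi}+\frac{(1-q)t_e}{1-\frac{t_r}{t_k}(1-F_{\pi}(p))}\cdot\frac{\int_{\underline{\pi}}^{p}x f_{\pi}(x)\,dx}{F_{\pi}(p)}$ subject to $q t_e\le t_s$, $\underline{\pi}\le p\le\bar{\pi}$, $0\le q\le 1$, $\frac{(1-q)t_e}{\left(1-\frac{t_r}{t_k}(1-F_{\pi}(p))\right)F_{\pi}(p)}\le t_s$, $t_r<\frac{t_k}{2(1-F_{\pi}(p))}$. Then $|q_1^*-q_3^*|\le \frac{t_k}{t_e}$.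
   Context: (P1) models a one-time spot request with expected deadline guarantee; (P3) models a persistent spot request with recovery time $t_r$ per resumption. In both, $q$ is the fraction of a job of execution time $t_e$ and deadline $t_s$ run on an on-demand instance at price $\bar{\pi}$, $p$ is the spot bid, and spot prices in slots of length $t_k$ are i.i.d. with CDF $F_{\pi}$ and monotonically decreasing density $f_{\pi}$ on $[\underline{\pi},\bar{\pi}]$. *)

theory Defs
  imports "HOL-Analysis.Analysis"
begin

definition pexp :: "(real \<Rightarrow> real) \<Rightarrow> real \<Rightarrow> real \<Rightarrow> real" where
  "pexp f pl p = integral {pl..p} (\<lambda>x. x * f x)"

definition Phi1 :: "(real \<Rightarrow> real) \<Rightarrow> (real \<Rightarrow> real) \<Rightarrow> real \<Rightarrow> real \<Rightarrow> real \<Rightarrow> real \<Rightarrow> real \<Rightarrow> real" where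
  "Phi1 F f pl ph te p q = q * te * ph + (1 - q) * te * pexp f pl p / F p"

definition feasible1 :: "(real \<Rightarrow> real) \<Rightarrow> real \<Rightarrow> real \<Rightarrow> real \<Rightarrow> real \<Rightarrow> real \<Rightarrow> real \<Rightarrow> real \<Rightarrow> bool" where
  "feasible1 F pl ph tk te ts p q \<longleftrightarrow>
     F p > 0 \<and>
     (1 - q) * te * (1 - F p) \<le> tk \<and>
     tk * (1 / F p - 1) + (1 - q) * te \<le> ts \<and>
     q * te \<le> ts \<and>
     pl \<le> p \<and> p \<le> ph \<and> 0 \<le> q \<and> q \<le> 1"

definition Phi3 :: "(real \<Rightarrow> real) \<Rightarrow> (real \<Rightarrow> real) \<Rightarrow> real \<Rightarrow> real \<Rightarrow> real \<Rightarrow> real \<Rightarrow> real \<Rightarrow> real \<Rightarrow> real \<Rightarrow> real" where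
  "Phi3 F f pl ph tk te tr p q =
     q * te * ph + (1 - q) * te / (1 - tr / tk * (1 - F p)) * (pexp f pl p / F p)"

definition feasible3 :: "(real \<Rightarrow> real) \<Rightarrow> real \<Rightarrow> real \<Rightarrow> real \<Rightarrow> real \<Rightarrow> real \<Rightarrow> real \<Rightarrow> real \<Rightarrow> real \<Rightarrow> bool" where
  "feasible3 F pl ph tk te ts tr p q \<longleftrightarrow>
     F p > 0 \<and>
     q * te \<le> ts \<and>
     pl \<le> p \<and> p \<le> ph \<and> 0 \<le> q \<and> q \<le> 1 \<and>
     (1 - q) * te / ((1 - tr / tk * (1 - F p)) * F p) \<le> ts \<and>
     2 * tr * (1 - F p) < tk"

end

theory Submission
  imports Defs
begin

text \<open>Let saving(p), the integral of (ph - x) f(x) over [pl, p], be the expected saving of a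
  spot instance won at bid p over the on-demand price; both costs are te ph minus a saving
  term. The point p = ph, q = 1 - ts/te is feasible for both problems and costs
  te ph - ts saving(ph). In (P3) every feasible point costs at least this much, with equality
  only if F(p) = 1 and (1 - q) te = ts. In (P1), comparing the optimum with this point and
  using two consequences of the decreasing density, saving(ph) - saving(p) \<ge> (ph - p)(1 - F(p))/2
  and 2 (1 - F(p)) saving(p) \<le> F(p) (ph - p) (2 - F(p)), gives ts \<le> (2 - F(p)) (1 - q) te;
  with (1 - q) te (1 - F(p)) \<le> tk this puts (1 - q1) te within tk below ts.\<close>

lemma has_integral_shifted_ident:
  fixes a b c :: real
  assumes "a \<le> b"
  shows "((\<lambda>x. x - c) has_integral ((b - c)\<^sup>2 - (a - c)\<^sup>2) / 2) {a..b}"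
proof -
  have "((\<lambda>x. (x - c)\<^sup>2 / 2) has_vector_derivative x - c) (at x within {a..b})" for x
    unfolding has_real_derivative_iff_has_vector_derivative[symmetric]
    by (auto intro!: derivative_eq_intros)
  from fundamental_theorem_of_calculus[OF assms this] show ?thesis
    by (simp add: diff_divide_distrib)
qed

lemma integral_decreasing_weighted_ge:
  fixes f :: "real \<Rightarrow> real"
  assumes "a \<le> b" and f: "f integrable_on {a..b}"
    and g: "(\<lambda>x. (b - x) * f x) integrable_on {a..b}"
    and decreasing: "\<forall>x\<in>{a..b}. \<forall>y\<in>{a..b}. x \<le> y \<longrightarrow> f y \<le> f x"
  shows "(b - a) / 2 * integral {a..b} f \<le> integral {a..b} (\<lambda>x. (b - x) * f x)"
proof -
  define m where "m = (a + b) / 2"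
  have m: "m \<in> {a..b}" using \<open>a \<le> b\<close> by (simp add: m_def)
  have centred: "((\<lambda>x. (x - m) * f m) has_integral 0) {a..b}"
  proof -
    have "((b - m)\<^sup>2 - (a - m)\<^sup>2) / 2 = 0"
      by (simp add: m_def power2_eq_square field_simps)
    with has_integral_mult_left[OF has_integral_shifted_ident[OF \<open>a \<le> b\<close>, of m], of "f m"]
    show ?thesis by simp
  qed
  have split: "(\<lambda>x. (b - x) * f x) = (\<lambda>x. (b - a) / 2 * f x - (x - m) * f x)"
    by (auto simp: m_def field_simps)
  have mf: "(\<lambda>x. (x - m) * f x) integrable_on {a..b}"
    using integrable_diff[OF integrable_on_mult_right[OF f, of "(b - a) / 2"] g]
    by (simp add: m_def field_simps)
  \<comment> \<open>Chebyshev: x - m increases while f decreases, so freezing f at the midpoint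
      can only increase the integrand.\<close>
  have "integral {a..b} (\<lambda>x. (x - m) * f x) \<le> 0"
  proof -
    have "(x - m) * f x \<le> (x - m) * f m" if "x \<in> {a..b}" for x
      using that m decreasing mult_left_mono_neg[of "f m" "f x" "x - m"]
        mult_left_mono[of "f x" "f m" "x - m"]
      by (cases "x \<le> m") auto
    from has_integral_le[OF integrable_integral[OF mf] centred this] show ?thesis .
  qed
  moreover have "integral {a..b} (\<lambda>x. (b - x) * f x)
      = (b - a) / 2 * integral {a..b} f - integral {a..b} (\<lambda>x. (x - m) * f x)"
    unfolding split by (subst integral_diff) (auto intro: integrable_on_mult_right f mf)
  ultimately show ?thesis by linarith
qed

lemma integral_ramp_weighted_ge:
  fixes f :: "real \<Rightarrow> real"
  assumes "a \<le> b" and g: "(\<lambda>x. (x - a) * f x) integrable_on {a..b}"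
    and lower: "\<forall>x\<in>{a..b}. d \<le> f x"
  shows "d * (b - a)\<^sup>2 / 2 \<le> integral {a..b} (\<lambda>x. (x - a) * f x)"
proof -
  have ramp: "((\<lambda>x. (x - a) * d) has_integral (b - a)\<^sup>2 / 2 * d) {a..b}"
    using has_integral_mult_left[OF has_integral_shifted_ident[OF \<open>a \<le> b\<close>, of a]] by simp
  have "(x - a) * d \<le> (x - a) * f x" if "x \<in> {a..b}" for x
    using that lower by (intro mult_left_mono) auto
  from has_integral_le[OF ramp integrable_integral[OF g] this] show ?thesis
    by (simp add: mult.commute)
qed

lemma square_completion_bound:
  fixes F S d g h :: real
  assumes "F \<le> 1" "0 \<le> h"
    and S: "S \<le> F * (g + h) - d * g\<^sup>2 / 2" and T: "1 - F \<le> d * h"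
  shows "2 * (1 - F) * S \<le> F * h * (2 - F)"
proof (cases "h = 0")
  case True
  then show ?thesis using T \<open>F \<le> 1\<close> by simp
next
  case False
  then have "0 < h" using \<open>0 \<le> h\<close> by simp
  have "h * (2 * (1 - F) * S) \<le> 2 * h * (1 - F) * F * (g + h) - (1 - F) * (d * h) * g\<^sup>2"
    using mult_left_mono[OF S, of "2 * h * (1 - F)"] \<open>0 < h\<close> \<open>F \<le> 1\<close>
    by (simp add: algebra_simps)
  also have "\<dots> \<le> 2 * h * (1 - F) * F * (g + h) - (1 - F)\<^sup>2 * g\<^sup>2"
    using mult_right_mono[OF mult_left_mono[OF T, of "1 - F"], of "g\<^sup>2"] \<open>F \<le> 1\<close>
    by (simp add: power2_eq_square algebra_simps)
  also have "\<dots> = h * (F * h * (2 - F)) - (F * h - (1 - F) * g)\<^sup>2"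
    by (simp add: power2_eq_square algebra_simps)
  also have "\<dots> \<le> h * (F * h * (2 - F))"
    by simp
  finally show ?thesis
    using \<open>0 < h\<close> by simp
qed

lemma benchmark_comparison_bound:
  fixes F S Y U h ts :: real
  assumes "0 < F" "F \<le> 1" "0 \<le> h" "0 \<le> U" "0 < ts" "0 < Y"
    and opt: "ts * F * Y \<le> U * S"
    and tail: "S + h / 2 * (1 - F) \<le> Y"
    and head: "2 * (1 - F) * S \<le> F * h * (2 - F)"
    and top: "h = 0 \<Longrightarrow> F = 1"
  shows "ts \<le> (2 - F) * U"
proof -
  have "ts * F * (S + h / 2 * (1 - F)) \<le> ts * F * Y"
    using tail \<open>0 < F\<close> \<open>0 < ts\<close> by (intro mult_left_mono) auto
  with opt have gain: "ts * F * (1 - F) * h / 2 \<le> S * (U - ts * F)"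
    by (simp add: algebra_simps)
  have "0 < U * S"
    using opt \<open>0 < F\<close> \<open>0 < ts\<close> \<open>0 < Y\<close> by (smt (verit) mult_pos_pos)
  then have "0 < S"
    using \<open>0 \<le> U\<close> by (simp add: zero_less_mult_iff)
  moreover have "0 \<le> ts * F * (1 - F) * h / 2"
    using \<open>0 < F\<close> \<open>F \<le> 1\<close> \<open>0 \<le> h\<close> \<open>0 < ts\<close> by simp
  ultimately have margin: "0 \<le> U - ts * F"
    using gain by (smt (verit) zero_le_mult_iff)
  show ?thesis
  proof (cases "F = 1")
    case True
    then show ?thesis using margin by simp
  next
    case False
    then have "0 < F * h" using top \<open>0 \<le> h\<close> \<open>0 < F\<close> by force
    have "F * h * (ts * (1 - F)\<^sup>2) = 2 * (1 - F) * (ts * F * (1 - F) * h / 2)"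
      by (simp add: power2_eq_square)
    also have "\<dots> \<le> 2 * (1 - F) * S * (U - ts * F)"
      using mult_left_mono[OF gain, of "2 * (1 - F)"] \<open>F \<le> 1\<close> by simp
    also have "\<dots> \<le> F * h * (2 - F) * (U - ts * F)"
      using head margin by (rule mult_right_mono)
    also have "\<dots> = F * h * ((2 - F) * (U - ts * F))"
      by (simp only: mult.assoc)
    finally have "ts * (1 - F)\<^sup>2 \<le> (2 - F) * (U - ts * F)"
      using mult_le_cancel_left_pos[OF \<open>0 < F * h\<close>] by blast
    then show ?thesis
      by (simp add: power2_eq_square algebra_simps)
  qed
qed

locale decreasing_density =
  fixes F f :: "real \<Rightarrow> real" and pl ph :: real
  assumes price_bounds: "0 \<le> pl" "pl < ph"
    and density_nonneg: "\<forall>x\<in>{pl..ph}. 0 \<le> f x"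
    and density_decreasing: "\<forall>x\<in>{pl..ph}. \<forall>y\<in>{pl..ph}. x \<le> y \<longrightarrow> f y \<le> f x"
    and density_integrable: "f integrable_on {pl..ph}"
    and density_total: "integral {pl..ph} f = 1"
    and cdf_integral: "\<forall>x\<in>{pl..ph}. F x = integral {pl..x} f"
begin

definition saving :: "real \<Rightarrow> real" where
  "saving p = integral {pl..p} (\<lambda>x. (ph - x) * f x)"

lemma saving_integrand_integrable: "(\<lambda>x. (ph - x) * f x) integrable_on {pl..ph}"
proof -
  have "mono_on {pl..ph} (\<lambda>x. - ((ph - x) * f x))"
    using density_decreasing density_nonneg by (intro mono_onI) (simp add: mult_mono)
  from integrable_neg[OF integrable_on_mono_on[OF this]] show ?thesis by simp
qed

lemma integrable_on_subintervals:
  assumes "pl \<le> a" "b \<le> ph"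
  shows "f integrable_on {a..b}" "(\<lambda>x. (ph - x) * f x) integrable_on {a..b}"
  using integrable_on_subinterval[OF density_integrable] assms
    integrable_on_subinterval[OF saving_integrand_integrable] by auto

lemma tail_mass:
  assumes "p \<in> {pl..ph}"
  shows "integral {p..ph} f = 1 - F p"
  using Henstock_Kurzweil_Integration.integral_combine[of pl p ph f] assms
    density_integrable density_total cdf_integral
  by auto

lemma cdf_le_1:
  assumes "p \<in> {pl..ph}"
  shows "F p \<le> 1"
proof -
  have "0 \<le> integral {p..ph} f"
    using assms density_nonneg integrable_on_subintervals(1)[of p ph]
    by (intro integral_nonneg) auto
  then show ?thesis using tail_mass[OF assms] by simp
qed

lemma cdf_top: "F ph = 1"
  using cdf_integral density_total price_bounds by auto

lemma pexp_eq_saving: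
  assumes "p \<in> {pl..ph}"
  shows "pexp f pl p = ph * F p - saving p"
proof -
  have "pexp f pl p = integral {pl..p} (\<lambda>x. ph * f x - (ph - x) * f x)"
    unfolding pexp_def by (intro integral_cong) (simp add: algebra_simps)
  also have "\<dots> = ph * F p - saving p"
    using assms cdf_integral integrable_on_subintervals[of pl p] unfolding saving_def
    by (subst integral_diff) (auto intro: integrable_on_mult_right)
  finally show ?thesis .
qed

lemma saving_nonneg:
  assumes "p \<in> {pl..ph}"
  shows "0 \<le> saving p"
  unfolding saving_def using assms density_nonneg integrable_on_subintervals(2)[of pl p]
  by (intro integral_nonneg) auto

lemma saving_top_pos: "0 < saving ph"
proof -
  have "(ph - pl) / 2 * integral {pl..ph} f \<le> saving ph"
    unfolding saving_def
    using price_bounds density_integrable saving_integrand_integrable density_decreasing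
    by (intro integral_decreasing_weighted_ge) auto
  then show ?thesis using price_bounds density_total by simp
qed

lemma saving_tail_bound:
  assumes "p \<in> {pl..ph}"
  shows "saving p + (ph - p) / 2 * (1 - F p) \<le> saving ph"
proof -
  have "(ph - p) / 2 * integral {p..ph} f \<le> integral {p..ph} (\<lambda>x. (ph - x) * f x)"
    using assms integrable_on_subintervals[of p ph] density_decreasing
    by (intro integral_decreasing_weighted_ge) auto
  moreover have "saving p + integral {p..ph} (\<lambda>x. (ph - x) * f x) = saving ph"
    using Henstock_Kurzweil_Integration.integral_combine[OF _ _ saving_integrand_integrable] assms
    by (auto simp: saving_def)
  ultimately show ?thesis using tail_mass[OF assms] by simp
qed

lemma saving_head_bound:
  assumes p: "p \<in> {pl..ph}"
  shows "2 * (1 - F p) * saving p \<le> F p * (ph - p) * (2 - F p)"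
proof (rule square_completion_bound)
  show "F p \<le> 1" "0 \<le> ph - p"
    using p cdf_le_1 by auto
  have "integral {p..ph} f \<le> integral {p..ph} (\<lambda>x. f p)"
    using p integrable_on_subintervals(1)[of p ph] density_decreasing
    by (intro integral_le) auto
  then show "1 - F p \<le> f p * (ph - p)"
    using p tail_mass by (simp add: mult.commute)
  have ramp: "(\<lambda>x. (x - pl) * f x) integrable_on {pl..p}"
  proof -
    have "(\<lambda>x. (x - pl) * f x) = (\<lambda>x. (ph - pl) * f x - (ph - x) * f x)"
      by (auto simp: algebra_simps)
    then show ?thesis
      using p integrable_on_subintervals[of pl p]
      by (auto intro: integrable_diff integrable_on_mult_right)
  qed
  have "saving p = (ph - pl) * F p - integral {pl..p} (\<lambda>x. (x - pl) * f x)"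
  proof -
    have "saving p = integral {pl..p} (\<lambda>x. (ph - pl) * f x - (x - pl) * f x)"
      unfolding saving_def by (intro integral_cong) (simp add: algebra_simps)
    also have "\<dots> = (ph - pl) * F p - integral {pl..p} (\<lambda>x. (x - pl) * f x)"
      using p cdf_integral ramp integrable_on_subintervals(1)[of pl p]
      by (subst integral_diff) (auto intro: integrable_on_mult_right)
    finally show ?thesis .
  qed
  moreover have "f p * (p - pl)\<^sup>2 / 2 \<le> integral {pl..p} (\<lambda>x. (x - pl) * f x)"
    using p ramp density_decreasing by (intro integral_ramp_weighted_ge) auto
  ultimately show "saving p \<le> F p * (p - pl + (ph - p)) - f p * (p - pl)\<^sup>2 / 2"
    by (simp add: algebra_simps)
qed

lemma Phi1_eq_saving:
  assumes "p \<in> {pl..ph}" "F p \<noteq> 0"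
  shows "Phi1 F f pl ph te p q = te * ph - (1 - q) * te * saving p / F p"
  using assms by (simp add: Phi1_def pexp_eq_saving field_simps)

lemma benchmark_feasible:
  assumes "0 < tk" "0 < ts" "ts \<le> te" "te \<le> 2 * ts"
  shows "feasible1 F pl ph tk te ts ph (1 - ts / te)"
    and "feasible3 F pl ph tk te ts tr ph (1 - ts / te)"
  using assms price_bounds cdf_top by (auto simp: feasible1_def feasible3_def field_simps)

lemma benchmark_cost:
  assumes "0 < te"
  shows "Phi1 F f pl ph te ph (1 - ts / te) = te * ph - ts * saving ph"
    and "Phi3 F f pl ph tk te tr ph (1 - ts / te) = te * ph - ts * saving ph"
proof -
  have pexp_top: "pexp f pl ph = ph - saving ph"
    using pexp_eq_saving[of ph] price_bounds cdf_top by simp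
  show "Phi1 F f pl ph te ph (1 - ts / te) = te * ph - ts * saving ph"
    and "Phi3 F f pl ph tk te tr ph (1 - ts / te) = te * ph - ts * saving ph"
    unfolding Phi1_def Phi3_def cdf_top pexp_top using assms by (simp_all add: field_simps)
qed

lemma P1_optimal_spot_time:
  assumes "0 < tk" "0 < ts" "ts \<le> te" "te \<le> 2 * ts"
    and opt: "feasible1 F pl ph tk te ts p1 q1"
      "\<forall>p q. feasible1 F pl ph tk te ts p q \<longrightarrow>
         Phi1 F f pl ph te p1 q1 \<le> Phi1 F f pl ph te p q"
  shows "ts - tk \<le> (1 - q1) * te" and "(1 - q1) * te \<le> ts"
proof -
  define U where "U = (1 - q1) * te"
  from opt(1) have p1: "p1 \<in> {pl..ph}" "0 < F p1" "0 \<le> U" "U * (1 - F p1) \<le> tk"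
    and deadline: "tk * (1 / F p1 - 1) + U \<le> ts"
    using assms(2,3) by (auto simp: feasible1_def U_def)
  have "te * ph - U * saving p1 / F p1 = Phi1 F f pl ph te p1 q1"
    using p1 by (simp add: Phi1_eq_saving U_def)
  also have "\<dots> \<le> Phi1 F f pl ph te ph (1 - ts / te)"
    using opt(2) benchmark_feasible(1)[OF assms(1-4)] by blast
  also have "\<dots> = te * ph - ts * saving ph"
    using benchmark_cost(1) assms(2,3) by simp
  finally have benchmark: "ts * F p1 * saving ph \<le> U * saving p1"
    using p1(2) by (simp add: pos_le_divide_eq mult.commute mult.left_commute)
  have "ts \<le> (2 - F p1) * U"
  proof (rule benchmark_comparison_bound
      [where F = "F p1" and S = "saving p1" and h = "ph - p1" and Y = "saving ph"])
    show "saving p1 + (ph - p1) / 2 * (1 - F p1) \<le> saving ph"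
      using p1(1) by (rule saving_tail_bound)
    show "2 * (1 - F p1) * saving p1 \<le> F p1 * (ph - p1) * (2 - F p1)"
      using p1(1) by (rule saving_head_bound)
    show "ph - p1 = 0 \<Longrightarrow> F p1 = 1"
      using cdf_top by simp
  qed (use benchmark p1 assms(2) saving_top_pos cdf_le_1 in auto)
  with p1(4) show "ts - tk \<le> (1 - q1) * te"
    by (simp add: U_def algebra_simps)
  have "0 \<le> tk * (1 / F p1 - 1)"
    using p1 cdf_le_1 assms(1) by simp
  with deadline show "(1 - q1) * te \<le> ts"
    by (simp add: U_def)
qed

lemma P3_optimal_spot_time:
  assumes "0 < tk" "0 < tr" "0 < ts" "ts \<le> te" "te \<le> 2 * ts"
    and opt: "feasible3 F pl ph tk te ts tr p3 q3"
      "\<forall>p q. feasible3 F pl ph tk te ts tr p q \<longrightarrow>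
         Phi3 F f pl ph tk te tr p3 q3 \<le> Phi3 F f pl ph tk te tr p q"
  shows "(1 - q3) * te = ts"
proof -
  define U where "U = (1 - q3) * te"
  define D where "D = 1 - tr / tk * (1 - F p3)"
  define W where "W = U / (D * F p3)"
  from opt(1) have p3: "p3 \<in> {pl..ph}" "0 < F p3" "0 \<le> U" "W \<le> ts"
    and failure: "2 * tr * (1 - F p3) < tk"
    using assms(3,4) by (auto simp: feasible3_def U_def D_def W_def)
  have "0 \<le> tr / tk * (1 - F p3)"
    using assms(1,2) p3 cdf_le_1 by simp
  moreover have "tr / tk * (1 - F p3) < 1"
    using failure assms(1) by (simp add: field_simps)
  ultimately have D: "0 < D" "D \<le> 1"
    by (auto simp: D_def)
  \<comment> \<open>The cost exceeds the benchmark cost by two nonnegative terms: the saving lost against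
      the benchmark, and the overhead ph U (1/D - 1) of recovering from interruptions.\<close>
  have "Phi3 F f pl ph tk te tr p3 q3 = te * ph - W * saving p3 + ph * U * (1 / D - 1)"
    unfolding Phi3_def D_def[symmetric] using p3 D
    by (simp add: pexp_eq_saving U_def W_def field_simps)
  moreover have "Phi3 F f pl ph tk te tr p3 q3 \<le> Phi3 F f pl ph tk te tr ph (1 - ts / te)"
    using opt(2) benchmark_feasible(2)[OF assms(1,3-5)] by blast
  moreover have "Phi3 F f pl ph tk te tr ph (1 - ts / te) = te * ph - ts * saving ph"
    using benchmark_cost(2) assms(3,4) by simp
  ultimately have excess: "(ts * saving ph - W * saving p3) + ph * U * (1 / D - 1) \<le> 0"
    by simp
  have "0 \<le> W"
    using p3 D by (simp add: W_def)
  have "0 \<le> (ph - p3) / 2 * (1 - F p3)"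
    using p3(1) cdf_le_1[OF p3(1)] by simp
  with saving_tail_bound[OF p3(1)] have saving_le: "saving p3 \<le> saving ph"
    by linarith
  have "W * saving p3 \<le> ts * saving ph"
    using p3(4) saving_le saving_nonneg[OF p3(1)] \<open>0 \<le> W\<close> by (intro mult_mono) auto
  moreover have "0 \<le> ph * U * (1 / D - 1)"
    using price_bounds p3(3) D by simp
  ultimately have lost: "W * saving p3 = ts * saving ph"
    and overhead: "ph * U * (1 / D - 1) = 0"
    using excess by linarith+
  have "ts * saving ph \<le> W * saving ph"
    using lost mult_left_mono[OF saving_le \<open>0 \<le> W\<close>] by simp
  then have "W = ts"
    using p3(4) saving_top_pos by simp
  then have "U \<noteq> 0"
    using assms(3) by (auto simp: W_def)
  moreover have "ph \<noteq> 0"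
    using price_bounds by simp
  ultimately have "D = 1"
    using overhead D(1) by simp
  then have "F p3 = 1"
    using assms(1,2) by (simp add: D_def)
  with \<open>W = ts\<close> \<open>D = 1\<close> show ?thesis
    by (simp add: W_def U_def)
qed

end

theorem lemma8:
  fixes F f :: "real \<Rightarrow> real" and pl ph tk te ts tr :: real
    and p1 q1 p3 q3 :: real
  assumes prices: "0 \<le> pl" "pl < ph"
    and dens_nonneg: "\<forall>x\<in>{pl..ph}. 0 \<le> f x"
    and dens_decr: "\<forall>x\<in>{pl..ph}. \<forall>y\<in>{pl..ph}. x \<le> y \<longrightarrow> f y \<le> f x"
    and dens_int: "f integrable_on {pl..ph}"
    and dens_total: "integral {pl..ph} f = 1"
    and cdf: "\<forall>x\<in>{pl..ph}. F x = integral {pl..x} f"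
    and times: "tk > 0" "te > 0" "ts > 0" "tr > 0" "ts < te" "te \<le> 2 * ts"
    and opt1: "feasible1 F pl ph tk te ts p1 q1"
      "\<forall>p q. feasible1 F pl ph tk te ts p q \<longrightarrow> Phi1 F f pl ph te p1 q1 \<le> Phi1 F f pl ph te p q"
    and opt3: "feasible3 F pl ph tk te ts tr p3 q3"
      "\<forall>p q. feasible3 F pl ph tk te ts tr p q \<longrightarrow> Phi3 F f pl ph tk te tr p3 q3 \<le> Phi3 F f pl ph tk te tr p q"
  shows "\<bar>q1 - q3\<bar> \<le> tk / te"
proof -
  interpret decreasing_density F f pl ph
    using prices dens_nonneg dens_decr dens_int dens_total cdf by unfold_locales
  have "ts \<le> te"
    using times(5) by simp
  have "ts - tk \<le> (1 - q1) * te" "(1 - q1) * te \<le> ts"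
    using P1_optimal_spot_time[OF times(1,3) \<open>ts \<le> te\<close> times(6) opt1] by auto
  moreover have "(1 - q3) * te = ts"
    using P3_optimal_spot_time[OF times(1,4,3) \<open>ts \<le> te\<close> times(6) opt3] .
  ultimately have "0 \<le> (q1 - q3) * te" "(q1 - q3) * te \<le> tk"
    by (simp_all add: algebra_simps)
  then show ?thesis
    using times(2) by (simp add: pos_le_divide_eq zero_le_mult_iff)
qed

end
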